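(* Let $\mathbf{a}_1,\ldots,\mathbf{a}_m\in\mathbb{C}^d$ be i.i.d. complex Gaussian random vectors. There are universal constants $C,c>0$ such that if $m\ge Cd$, then with probability at least $1-3\exp(-cm)$, \[ \frac1m\sum_{j=1}^m\Big||\mathbf{a}_j^*\mathbf{z}+b_j|^2-|\mathbf{a}_j^*\mathbf{w}+b_j|^2\Big|\le\frac32\Big(\|\mathbf{z}\|_2+\|\mathbf{w}\|_2+\frac{2\|\mathbf{b}\|_2}{\sqrt m}\Big)\|\mathbf{z}-\mathbf{w}\|_2 \] for all $\mathbf{z},\mathbf{w}\in\mathbb{C}^d$ and all $\mathbf{b}=(b_1,\ldots,b_m)^\top\in\mathbb{C}^m$.
   Context: A complex Gaussian random vector $\mathbf{a}\in\mathbb{C}^d$ means $\mathbf{a}\sim\frac{1}{\sqrt2}\mathcal{N}(0,I_d)+\frac{i}{\sqrt2}\mathcal{N}(0,I_d)$. *)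

theory Defs
  imports "HOL-Probability.Probability"
begin

definition std_gauss :: "real measure" where
  "std_gauss = density lborel std_normal_density"

definition complex_gauss :: "complex measure" where
  "complex_gauss = distr (std_gauss \<Otimes>\<^sub>M std_gauss) borel
     (\<lambda>(x, y). Complex (x / sqrt 2) (y / sqrt 2))"

definition complex_gauss_vec :: "nat \<Rightarrow> (nat \<Rightarrow> complex) measure" where
  "complex_gauss_vec d = PiM {..<d} (\<lambda>_. complex_gauss)"

definition gauss_sample :: "nat \<Rightarrow> nat \<Rightarrow> (nat \<Rightarrow> nat \<Rightarrow> complex) measure" where
  "gauss_sample m d = PiM {..<m} (\<lambda>_. complex_gauss_vec d)"

definition cinner :: "nat \<Rightarrow> (nat \<Rightarrow> complex) \<Rightarrow> (nat \<Rightarrow> complex) \<Rightarrow> complex" where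
  "cinner d a z = (\<Sum>k<d. cnj (a k) * z k)"

definition cnorm2 :: "nat \<Rightarrow> (nat \<Rightarrow> complex) \<Rightarrow> real" where
  "cnorm2 n z = sqrt (\<Sum>k<n. (cmod (z k))\<^sup>2)"

end

theory Submission
  imports Defs
begin

text \<open>Write \<open>\<parallel>A u\<parallel>\<close> for the Euclidean norm of \<open>(a\<^sub>j\<^sup>* u)\<^sub>j\<close>. Since
  \<open>\<bar>\<bar>p\<bar>\<^sup>2 - \<bar>q\<bar>\<^sup>2\<bar> \<le> \<bar>p - q\<bar> \<bar>p + q\<bar>\<close>, Cauchy-Schwarz reduces the claim to the
  deterministic bound \<open>\<parallel>A u\<parallel> \<le> sqrt (3 m / 2) \<parallel>u\<parallel>\<close> for all \<open>u\<close>.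
  For fixed \<open>y\<close>, \<open>\<parallel>A y\<parallel>\<^sup>2\<close> is a sum of \<open>m\<close> independent exponential variables of
  mean \<open>\<parallel>y\<parallel>\<^sup>2\<close>, so a Chernoff bound gives \<open>P(\<parallel>A y\<parallel>\<^sup>2 > 6/5 m \<parallel>y\<parallel>\<^sup>2) \<le> \<rho>\<^sup>m\<close>
  with \<open>\<rho> = 6/5 exp (-1/5) < 1\<close>. Rounding to a scaled Gaussian-integer lattice gives a
  \<open>1/20\<close>-net of the unit ball of \<open>\<complex>\<^sup>d\<close> with at most \<open>B\<^sup>d\<close> points; a union bound
  over the net costs \<open>B\<^sup>d \<rho>\<^sup>m \<le> exp (- c m)\<close> once \<open>m \<ge> C d\<close>, and the standard net
  argument extends the bound from the net to all \<open>u\<close> at the price of a factor \<open>21/19\<close>.\<close>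

lemma prob_space_std_gauss: "prob_space std_gauss"
  unfolding std_gauss_def by (rule prob_space_normal_density) simp

lemma sets_std_gauss [measurable_cong, simp]: "sets std_gauss = sets borel"
  unfolding std_gauss_def by simp

lemma nn_integral_normal_density: "0 < \<sigma> \<Longrightarrow> (\<integral>\<^sup>+x. normal_density \<mu> \<sigma> x \<partial>lborel) = 1"
  by (subst nn_integral_eq_integral) auto

lemma nn_integral_std_gauss_exp_linear:
  "(\<integral>\<^sup>+x. ennreal (exp (t * x)) \<partial>std_gauss) = ennreal (exp (t\<^sup>2 / 2))"
proof -
  have shift: "std_normal_density x * exp (t * x) = exp (t\<^sup>2 / 2) * normal_density t 1 x" for x
  proof -
    have "- x\<^sup>2 / 2 + t * x = t\<^sup>2 / 2 + (- (x - t)\<^sup>2 / 2)"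
      by (simp add: power2_eq_square field_simps)
    then show ?thesis
      unfolding std_normal_density_def normal_density_def by (simp flip: exp_add)
  qed
  have "(\<integral>\<^sup>+x. ennreal (exp (t * x)) \<partial>std_gauss)
      = (\<integral>\<^sup>+x. ennreal (std_normal_density x) * ennreal (exp (t * x)) \<partial>lborel)"
    unfolding std_gauss_def by (subst nn_integral_density) auto
  also have "\<dots> = (\<integral>\<^sup>+x. ennreal (exp (t\<^sup>2 / 2)) * ennreal (normal_density t 1 x) \<partial>lborel)"
    by (intro nn_integral_cong) (simp add: shift flip: ennreal_mult')
  also have "\<dots> = ennreal (exp (t\<^sup>2 / 2))"
    by (simp add: nn_integral_cmult nn_integral_normal_density)
  finally show ?thesis .
qed

lemma nn_integral_std_gauss_exp_square:
  assumes "r < 1 / 2"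
  shows "(\<integral>\<^sup>+x. ennreal (exp (r * x\<^sup>2)) \<partial>std_gauss) = ennreal (1 / sqrt (1 - 2 * r))"
proof -
  define \<sigma> where "\<sigma> = 1 / sqrt (1 - 2 * r)"
  have r: "0 < 1 - 2 * r" using assms by simp
  then have \<sigma>: "0 < \<sigma>" "\<sigma>\<^sup>2 = 1 / (1 - 2 * r)"
    by (simp_all add: \<sigma>_def power_divide)
  have rescale: "std_normal_density x * exp (r * x\<^sup>2) = \<sigma> * normal_density 0 \<sigma> x" for x
  proof -
    have "- x\<^sup>2 / 2 + r * x\<^sup>2 = - (x - 0)\<^sup>2 / (2 * \<sigma>\<^sup>2)"
      using r by (simp add: \<sigma>(2) field_simps)
    moreover have "1 / sqrt (2 * pi) = \<sigma> * (1 / sqrt (2 * pi * \<sigma>\<^sup>2))"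
      using \<sigma>(1) by (simp add: real_sqrt_mult)
    ultimately show ?thesis
      unfolding std_normal_density_def normal_density_def by (simp flip: exp_add)
  qed
  have "(\<integral>\<^sup>+x. ennreal (exp (r * x\<^sup>2)) \<partial>std_gauss)
      = (\<integral>\<^sup>+x. ennreal (std_normal_density x) * ennreal (exp (r * x\<^sup>2)) \<partial>lborel)"
    unfolding std_gauss_def by (subst nn_integral_density) auto
  also have "\<dots> = (\<integral>\<^sup>+x. ennreal \<sigma> * ennreal (normal_density 0 \<sigma> x) \<partial>lborel)"
    using \<sigma>(1) by (intro nn_integral_cong) (simp add: rescale flip: ennreal_mult)
  also have "\<dots> = ennreal \<sigma>"
    using \<sigma>(1) by (simp add: nn_integral_cmult nn_integral_normal_density)
  finally show ?thesis by (simp add: \<sigma>_def)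
qed

lemma nn_integral_pair_measure_mult:
  assumes "sigma_finite_measure N"
    and [measurable]: "f \<in> borel_measurable M" "g \<in> borel_measurable N"
  shows "(\<integral>\<^sup>+z. f (fst z) * g (snd z) \<partial>(M \<Otimes>\<^sub>M N)) = (\<integral>\<^sup>+x. f x \<partial>M) * (\<integral>\<^sup>+y. g y \<partial>N)"
proof -
  interpret N: sigma_finite_measure N by fact
  have "(\<integral>\<^sup>+z. f (fst z) * g (snd z) \<partial>(M \<Otimes>\<^sub>M N)) = (\<integral>\<^sup>+x. \<integral>\<^sup>+y. f x * g y \<partial>N \<partial>M)"
    by (subst N.nn_integral_fst[symmetric]) auto
  also have "\<dots> = (\<integral>\<^sup>+x. f x \<partial>M) * (\<integral>\<^sup>+y. g y \<partial>N)"
    by (simp add: nn_integral_cmult nn_integral_multc)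
  finally show ?thesis .
qed

lemma measurable_complex_gauss_map [measurable]:
  "(\<lambda>(x, y). Complex (x / sqrt 2) (y / sqrt 2)) \<in> borel_measurable (std_gauss \<Otimes>\<^sub>M std_gauss)"
proof -
  have "(\<lambda>(x, y). Complex (x / sqrt 2) (y / sqrt 2))
      = (\<lambda>z. complex_of_real (fst z / sqrt 2) + \<i> * complex_of_real (snd z / sqrt 2))"
    by (auto simp: Complex_eq)
  also have "\<dots> \<in> borel_measurable (borel \<Otimes>\<^sub>M borel)"
    by measurable
  finally show ?thesis by (simp cong: measurable_cong_sets)
qed

lemma prob_space_complex_gauss: "prob_space complex_gauss"
  unfolding complex_gauss_def
  by (intro prob_space.prob_space_distr measurable_complex_gauss_map prob_space_pair prob_space_std_gauss)

lemma sets_complex_gauss [measurable_cong, simp]: "sets complex_gauss = sets borel"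
  unfolding complex_gauss_def by simp

lemma nn_integral_complex_gauss_split:
  assumes [measurable]: "f \<in> borel_measurable borel" "g \<in> borel_measurable borel"
    "h \<in> borel_measurable borel"
    and h: "\<And>x y. h (Complex (x / sqrt 2) (y / sqrt 2)) = f x * g y"
  shows "(\<integral>\<^sup>+\<xi>. h \<xi> \<partial>complex_gauss) = (\<integral>\<^sup>+x. f x \<partial>std_gauss) * (\<integral>\<^sup>+y. g y \<partial>std_gauss)"
proof -
  have "(\<integral>\<^sup>+\<xi>. h \<xi> \<partial>complex_gauss) = (\<integral>\<^sup>+z. f (fst z) * g (snd z) \<partial>(std_gauss \<Otimes>\<^sub>M std_gauss))"
    unfolding complex_gauss_def by (subst nn_integral_distr) (auto simp: case_prod_beta h)
  then show ?thesis
    by (simp add: nn_integral_pair_measure_mult prob_space_imp_sigma_finite prob_space_std_gauss)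
qed

lemma nn_integral_complex_gauss_exp_Re:
  "(\<integral>\<^sup>+\<xi>. ennreal (exp (Re (cnj \<xi> * w))) \<partial>complex_gauss) = ennreal (exp ((cmod w)\<^sup>2 / 4))"
proof -
  have "(\<integral>\<^sup>+\<xi>. ennreal (exp (Re (cnj \<xi> * w))) \<partial>complex_gauss)
      = (\<integral>\<^sup>+x. ennreal (exp ((Re w / sqrt 2) * x)) \<partial>std_gauss)
        * (\<integral>\<^sup>+y. ennreal (exp ((Im w / sqrt 2) * y)) \<partial>std_gauss)"
    by (rule nn_integral_complex_gauss_split)
      (auto simp: algebra_simps exp_add simp flip: ennreal_mult)
  also have "\<dots> = ennreal (exp ((cmod w)\<^sup>2 / 4))"
    unfolding nn_integral_std_gauss_exp_linear
    by (simp add: cmod_power2 power_divide add_divide_distrib exp_add flip: ennreal_mult)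
  finally show ?thesis .
qed

lemma nn_integral_complex_gauss_exp_norm_square:
  assumes "l < 1"
  shows "(\<integral>\<^sup>+\<xi>. ennreal (exp (l * (cmod \<xi>)\<^sup>2)) \<partial>complex_gauss) = ennreal (1 / (1 - l))"
proof -
  have "(\<integral>\<^sup>+\<xi>. ennreal (exp (l * (cmod \<xi>)\<^sup>2)) \<partial>complex_gauss)
      = (\<integral>\<^sup>+x. ennreal (exp ((l / 2) * x\<^sup>2)) \<partial>std_gauss)
        * (\<integral>\<^sup>+y. ennreal (exp ((l / 2) * y\<^sup>2)) \<partial>std_gauss)"
    by (rule nn_integral_complex_gauss_split)
      (auto simp: cmod_power2 power_divide algebra_simps exp_add simp flip: ennreal_mult)
  also have "\<dots> = ennreal (1 / sqrt (1 - l)) * ennreal (1 / sqrt (1 - l))"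
    using nn_integral_std_gauss_exp_square[of "l / 2"] assms by simp
  also have "\<dots> = ennreal (1 / (1 - l))"
    using assms by (simp flip: ennreal_mult)
  finally show ?thesis .
qed

lemma cnorm2_conv_L2_set: "cnorm2 n z = L2_set (\<lambda>k. cmod (z k)) {..<n}"
  unfolding cnorm2_def L2_set_def ..

lemma cnorm2_nonneg: "0 \<le> cnorm2 n z"
  unfolding cnorm2_conv_L2_set by simp

lemma power2_cnorm2: "(cnorm2 n z)\<^sup>2 = (\<Sum>k<n. (cmod (z k))\<^sup>2)"
  unfolding cnorm2_def by (simp add: sum_nonneg)

lemma cnorm2_add_le: "cnorm2 n (\<lambda>k. u k + v k) \<le> cnorm2 n u + cnorm2 n v"
proof -
  have "cnorm2 n (\<lambda>k. u k + v k) \<le> L2_set (\<lambda>k. cmod (u k) + cmod (v k)) {..<n}"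
    unfolding cnorm2_conv_L2_set by (intro L2_set_mono norm_triangle_ineq) auto
  also have "\<dots> \<le> cnorm2 n u + cnorm2 n v"
    unfolding cnorm2_conv_L2_set by (rule L2_set_triangle_ineq)
  finally show ?thesis .
qed

lemma cnorm2_minus_commute: "cnorm2 n (\<lambda>k. u k - v k) = cnorm2 n (\<lambda>k. v k - u k)"
  unfolding cnorm2_conv_L2_set by (simp add: norm_minus_commute)

lemma cnorm2_mult: "cnorm2 n (\<lambda>k. c * u k) = cmod c * cnorm2 n u"
  unfolding cnorm2_conv_L2_set by (simp add: L2_set_right_distrib norm_mult)

lemma cinner_add_right: "cinner d a (\<lambda>k. u k + v k) = cinner d a u + cinner d a v"
  unfolding cinner_def by (simp add: algebra_simps sum.distrib)

lemma cinner_diff_right: "cinner d a (\<lambda>k. u k - v k) = cinner d a u - cinner d a v"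
  unfolding cinner_def by (simp add: algebra_simps sum_subtractf)

lemma cinner_mult_right: "cinner d a (\<lambda>k. c * u k) = c * cinner d a u"
  unfolding cinner_def by (simp add: algebra_simps sum_distrib_left)

lemma cmod_cinner_le: "cmod (cinner d a u) \<le> cnorm2 d a * cnorm2 d u"
proof -
  have "cmod (cinner d a u) \<le> (\<Sum>k<d. \<bar>cmod (a k)\<bar> * \<bar>cmod (u k)\<bar>)"
    unfolding cinner_def by (rule order_trans[OF norm_sum]) (simp add: norm_mult)
  also have "\<dots> \<le> cnorm2 d a * cnorm2 d u"
    unfolding cnorm2_conv_L2_set by (rule L2_set_mult_ineq)
  finally show ?thesis .
qed

lemma prob_space_complex_gauss_vec: "prob_space (complex_gauss_vec d)"
  unfolding complex_gauss_vec_def by (intro prob_space_PiM prob_space_complex_gauss)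

lemma prob_space_gauss_sample: "prob_space (gauss_sample m d)"
  unfolding gauss_sample_def by (intro prob_space_PiM prob_space_complex_gauss_vec)

lemma borel_measurable_cnj [measurable]: "cnj \<in> borel_measurable borel"
  by (intro borel_measurable_continuous_onI continuous_intros)

lemma measurable_cinner [measurable]: "(\<lambda>a. cinner d a y) \<in> borel_measurable (complex_gauss_vec d)"
  unfolding cinner_def complex_gauss_vec_def by measurable

lemma measurable_cnorm2_sample [measurable]:
  "(\<lambda>A. cnorm2 m (\<lambda>j. cinner d (A j) y)) \<in> borel_measurable (gauss_sample m d)"
  unfolding cnorm2_def gauss_sample_def by measurable

lemma nn_integral_complex_gauss_vec_exp_Re_cinner:
  "(\<integral>\<^sup>+a. ennreal (exp (Re (cinner d a u))) \<partial>complex_gauss_vec d)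
     = ennreal (exp ((cnorm2 d u)\<^sup>2 / 4))"
proof -
  interpret product_sigma_finite "\<lambda>_. complex_gauss"
    unfolding product_sigma_finite_def
    using prob_space_complex_gauss prob_space_imp_sigma_finite by blast
  have "(\<integral>\<^sup>+a. ennreal (exp (Re (cinner d a u))) \<partial>complex_gauss_vec d)
      = (\<integral>\<^sup>+a. (\<Prod>k<d. ennreal (exp (Re (cnj (a k) * u k)))) \<partial>complex_gauss_vec d)"
    unfolding cinner_def by (simp add: exp_sum prod_ennreal)
  also have "\<dots> = (\<Prod>k<d. \<integral>\<^sup>+\<xi>. ennreal (exp (Re (cnj \<xi> * u k))) \<partial>complex_gauss)"
    unfolding complex_gauss_vec_def by (rule product_nn_integral_prod) auto
  also have "\<dots> = ennreal (exp ((cnorm2 d u)\<^sup>2 / 4))"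
    unfolding nn_integral_complex_gauss_exp_Re
    by (simp add: power2_cnorm2 prod_ennreal sum_divide_distrib exp_sum)
  finally show ?thesis .
qed

text \<open>The variable \<open>a\<^sup>* y\<close> is a complex Gaussian of variance \<open>\<parallel>y\<parallel>\<^sup>2\<close>. Rather than computing its
  law, we linearise the square with an independent complex Gaussian \<open>\<xi>\<close>, using
  \<open>E\<^sub>\<xi> exp (Re (\<xi>\<^sup>* s)) = exp (\<bar>s\<bar>\<^sup>2 / 4)\<close>, and integrate over \<open>a\<close> first.\<close>

lemma nn_integral_complex_gauss_vec_exp_cinner_square:
  assumes l: "0 \<le> l" "l * (cnorm2 d y)\<^sup>2 < 1"
  shows "(\<integral>\<^sup>+a. ennreal (exp (l * (cmod (cinner d a y))\<^sup>2)) \<partial>complex_gauss_vec d)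
     = ennreal (1 / (1 - l * (cnorm2 d y)\<^sup>2))"
proof -
  interpret pair_sigma_finite "complex_gauss_vec d" complex_gauss
    by (intro pair_sigma_finite.intro prob_space_imp_sigma_finite
        prob_space_complex_gauss_vec prob_space_complex_gauss)
  let ?s = "\<lambda>a. 2 * sqrt l * cinner d a y"
  have "(\<integral>\<^sup>+a. ennreal (exp (l * (cmod (cinner d a y))\<^sup>2)) \<partial>complex_gauss_vec d)
      = (\<integral>\<^sup>+a. \<integral>\<^sup>+\<xi>. ennreal (exp (Re (cnj \<xi> * ?s a))) \<partial>complex_gauss \<partial>complex_gauss_vec d)"
    unfolding nn_integral_complex_gauss_exp_Re using l by (simp add: norm_mult power_mult_distrib)
  also have "\<dots> = (\<integral>\<^sup>+\<xi>. \<integral>\<^sup>+a. ennreal (exp (Re (cnj \<xi> * ?s a))) \<partial>complex_gauss_vec d \<partial>complex_gauss)"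
    by (rule Fubini'[symmetric]) measurable
  also have "\<dots> = (\<integral>\<^sup>+\<xi>. ennreal (exp ((l * (cnorm2 d y)\<^sup>2) * (cmod \<xi>)\<^sup>2)) \<partial>complex_gauss)"
  proof (intro nn_integral_cong)
    fix \<xi>
    have "cnj \<xi> * ?s a = cinner d a (\<lambda>k. (2 * sqrt l * cnj \<xi>) * y k)" for a
      by (simp add: cinner_mult_right)
    moreover have "(cnorm2 d (\<lambda>k. (2 * sqrt l * cnj \<xi>) * y k))\<^sup>2 / 4 = l * (cnorm2 d y)\<^sup>2 * (cmod \<xi>)\<^sup>2"
      using l by (simp add: cnorm2_mult norm_mult power_mult_distrib)
    ultimately show "(\<integral>\<^sup>+a. ennreal (exp (Re (cnj \<xi> * ?s a))) \<partial>complex_gauss_vec d)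
        = ennreal (exp ((l * (cnorm2 d y)\<^sup>2) * (cmod \<xi>)\<^sup>2))"
      by (simp add: nn_integral_complex_gauss_vec_exp_Re_cinner)
  qed
  also have "\<dots> = ennreal (1 / (1 - l * (cnorm2 d y)\<^sup>2))"
    by (rule nn_integral_complex_gauss_exp_norm_square[OF l(2)])
  finally show ?thesis .
qed

lemma nn_integral_gauss_sample_exp_cnorm2_square:
  assumes l: "0 \<le> l" "l * (cnorm2 d y)\<^sup>2 < 1"
  shows "(\<integral>\<^sup>+A. ennreal (exp (l * (cnorm2 m (\<lambda>j. cinner d (A j) y))\<^sup>2)) \<partial>gauss_sample m d)
     = ennreal ((1 / (1 - l * (cnorm2 d y)\<^sup>2)) ^ m)"
proof -
  interpret product_sigma_finite "\<lambda>_. complex_gauss_vec d"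
    unfolding product_sigma_finite_def
    using prob_space_complex_gauss_vec prob_space_imp_sigma_finite by blast
  have "(\<integral>\<^sup>+A. ennreal (exp (l * (cnorm2 m (\<lambda>j. cinner d (A j) y))\<^sup>2)) \<partial>gauss_sample m d)
      = (\<integral>\<^sup>+A. (\<Prod>j<m. ennreal (exp (l * (cmod (cinner d (A j) y))\<^sup>2))) \<partial>gauss_sample m d)"
    by (simp add: power2_cnorm2 sum_distrib_left exp_sum prod_ennreal)
  also have "\<dots> = (\<Prod>j<m. \<integral>\<^sup>+a. ennreal (exp (l * (cmod (cinner d a y))\<^sup>2)) \<partial>complex_gauss_vec d)"
    unfolding gauss_sample_def by (rule product_nn_integral_prod) auto
  also have "\<dots> = ennreal ((1 / (1 - l * (cnorm2 d y)\<^sup>2)) ^ m)"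
    using l by (simp add: nn_integral_complex_gauss_vec_exp_cinner_square prod_ennreal ennreal_power)
  finally show ?thesis .
qed

lemma gauss_sample_chernoff:
  assumes l: "0 < l" "l * (cnorm2 d y)\<^sup>2 < 1"
  shows "measure (gauss_sample m d) {A \<in> space (gauss_sample m d). t < (cnorm2 m (\<lambda>j. cinner d (A j) y))\<^sup>2}
    \<le> exp (- l * t) * (1 / (1 - l * (cnorm2 d y)\<^sup>2)) ^ m"
proof -
  let ?M = "gauss_sample m d"
  let ?Q = "\<lambda>A. (cnorm2 m (\<lambda>j. cinner d (A j) y))\<^sup>2"
  interpret prob_space ?M
    by (rule prob_space_gauss_sample)
  have "emeasure ?M {A \<in> space ?M. t < ?Q A} \<le> emeasure ?M {A \<in> space ?M. t \<le> ?Q A}"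
    by (intro emeasure_mono) auto
  also have "\<dots> \<le> ennreal (exp (- l * t)) * (\<integral>\<^sup>+A. ennreal (exp (l * ?Q A)) * indicator (space ?M) A \<partial>?M)"
    using l(1) by (intro Chernoff_ineq_nn_integral_ge) auto
  also have "(\<integral>\<^sup>+A. ennreal (exp (l * ?Q A)) * indicator (space ?M) A \<partial>?M)
      = (\<integral>\<^sup>+A. ennreal (exp (l * ?Q A)) \<partial>?M)"
    by (intro nn_integral_cong) simp
  also have "\<dots> = ennreal ((1 / (1 - l * (cnorm2 d y)\<^sup>2)) ^ m)"
    using l by (intro nn_integral_gauss_sample_exp_cnorm2_square) simp_all
  finally have "ennreal (measure ?M {A \<in> space ?M. t < ?Q A})
      \<le> ennreal (exp (- l * t) * (1 / (1 - l * (cnorm2 d y)\<^sup>2)) ^ m)"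
    using l by (simp add: emeasure_eq_measure ennreal_mult)
  then show ?thesis
    using l by (subst (asm) ennreal_le_iff) auto
qed

lemma gauss_sample_tail:
  assumes "1 < \<theta>"
  shows "measure (gauss_sample m d)
      {A \<in> space (gauss_sample m d). \<theta> * real m * (cnorm2 d y)\<^sup>2 < (cnorm2 m (\<lambda>j. cinner d (A j) y))\<^sup>2}
    \<le> (\<theta> * exp (1 - \<theta>)) ^ m"
proof (cases "cnorm2 d y = 0")
  case True
  then have "cnorm2 m (\<lambda>j. cinner d (A j) y) = 0" for A
    using cmod_cinner_le[of d _ y] by (simp add: cnorm2_def)
  then show ?thesis
    using assms by (simp add: True)
next
  case False
  define l where "l = (1 - 1 / \<theta>) / (cnorm2 d y)\<^sup>2"
  have "0 < (cnorm2 d y)\<^sup>2"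
    using False cnorm2_nonneg[of d y] by simp
  then have l: "0 < l" "l * (cnorm2 d y)\<^sup>2 = 1 - 1 / \<theta>"
    using assms by (simp_all add: l_def)
  let ?t = "\<theta> * real m * (cnorm2 d y)\<^sup>2"
  have "- l * ?t = - \<theta> * real m * (l * (cnorm2 d y)\<^sup>2)"
    by (simp add: algebra_simps)
  also have "\<dots> = real m * (1 - \<theta>)"
    using assms by (simp add: l(2) field_simps)
  finally have "exp (- l * ?t) = exp (1 - \<theta>) ^ m"
    by (simp add: exp_of_nat_mult)
  moreover have "1 / (1 - l * (cnorm2 d y)\<^sup>2) = \<theta>" "l * (cnorm2 d y)\<^sup>2 < 1"
    using assms by (simp_all add: l(2))
  ultimately show ?thesis
    using gauss_sample_chernoff[OF l(1), of d y m ?t] by (simp add: power_mult_distrib mult.commute)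
qed

text \<open>Rankin's trick: each counted tuple \<open>p\<close> contributes at least \<open>2^(-K)\<close> to
  \<open>\<Sum>\<^sub>p \<Prod>\<^sub>i 2^(-w (p i))\<close>, and this sum over all tuples factorises.\<close>

lemma card_PiE_weight_le:
  fixes w :: "'b \<Rightarrow> nat"
  assumes "finite I" "finite B"
  shows "real (card {p \<in> I \<rightarrow>\<^sub>E B. (\<Sum>i\<in>I. w (p i)) \<le> K})
    \<le> 2 ^ K * (\<Sum>b\<in>B. (1 / 2) ^ w b) ^ card I"
proof -
  let ?S = "{p \<in> I \<rightarrow>\<^sub>E B. (\<Sum>i\<in>I. w (p i)) \<le> K}"
  have "real (card ?S) = (\<Sum>p\<in>?S. 1)"
    by simp
  also have "\<dots> \<le> (\<Sum>p\<in>?S. 2 ^ K * (\<Prod>i\<in>I. (1 / 2 :: real) ^ w (p i)))"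
  proof (rule sum_mono)
    fix p assume "p \<in> ?S"
    then have "(1 / 2 :: real) ^ K \<le> (1 / 2) ^ (\<Sum>i\<in>I. w (p i))"
      by (intro power_decreasing) auto
    then show "1 \<le> 2 ^ K * (\<Prod>i\<in>I. (1 / 2 :: real) ^ w (p i))"
      by (simp add: power_sum power_one_over field_simps)
  qed
  also have "\<dots> \<le> (\<Sum>p\<in>I \<rightarrow>\<^sub>E B. 2 ^ K * (\<Prod>i\<in>I. (1 / 2 :: real) ^ w (p i)))"
    using assms by (intro sum_mono2 finite_PiE) (auto intro!: mult_nonneg_nonneg prod_nonneg)
  also have "\<dots> = 2 ^ K * (\<Sum>b\<in>B. (1 / 2) ^ w b) ^ card I"
    using prod_sum_PiE[OF assms, of "\<lambda>_ b. (1 / 2 :: real) ^ w b"]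
    by (simp add: sum_distrib_left)
  finally show ?thesis .
qed

lemma sum_half_power_abs:
  "(\<Sum>a\<in>{-int n..int n}. (1 / 2 :: real) ^ nat \<bar>a\<bar>) = 3 - 2 * (1 / 2) ^ n"
proof (induction n)
  case (Suc n)
  have "{-int (Suc n)..int (Suc n)} = insert (- int (Suc n)) (insert (int (Suc n)) {-int n..int n})"
    by auto
  moreover have "nat (int n + 1) = Suc n" "nat (1 + int n) = Suc n"
    by auto
  ultimately show ?case
    using Suc by simp
qed simp

definition gauss_int_weight :: "int \<times> int \<Rightarrow> nat" where
  "gauss_int_weight q = nat \<bar>fst q\<bar> + nat \<bar>snd q\<bar>"

lemma sum_half_power_gauss_int_weight_le:
  "(\<Sum>q\<in>{-int R..int R} \<times> {-int R..int R}. (1 / 2 :: real) ^ gauss_int_weight q) \<le> 9"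
proof -
  have "(\<Sum>q\<in>{-int R..int R} \<times> {-int R..int R}. (1 / 2 :: real) ^ gauss_int_weight q)
      = (3 - 2 * (1 / 2) ^ R) * (3 - 2 * (1 / 2) ^ R)"
    unfolding sum_half_power_abs[symmetric] sum_product sum.cartesian_product
    by (simp add: gauss_int_weight_def power_add case_prod_beta)
  also have "\<dots> \<le> 3 * 3"
    using power_le_one[of "1 / 2 :: real" R] by (intro mult_mono) auto
  finally show ?thesis
    by simp
qed

lemma round_approx:
  fixes x \<delta> :: real
  assumes "0 < \<delta>"
  shows "\<bar>x - \<delta> * of_int (round (x / \<delta>))\<bar> \<le> \<delta> / 2"
    and "real (nat \<bar>round (x / \<delta>)\<bar>) \<le> x\<^sup>2 / (2 * \<delta>\<^sup>2) + 1"
proof -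
  have r: "\<bar>of_int (round (x / \<delta>)) - x / \<delta>\<bar> \<le> 1 / 2"
    by (rule of_int_round_abs_le)
  have "\<bar>x - \<delta> * of_int (round (x / \<delta>))\<bar> = \<delta> * \<bar>of_int (round (x / \<delta>)) - x / \<delta>\<bar>"
    using assms by (simp add: abs_mult_pos' field_simps abs_minus_commute)
  also have "\<dots> \<le> \<delta> / 2"
    using mult_left_mono[OF r] assms by simp
  finally show "\<bar>x - \<delta> * of_int (round (x / \<delta>))\<bar> \<le> \<delta> / 2" .
  have "\<bar>real_of_int (round (x / \<delta>))\<bar> \<le> \<bar>x / \<delta>\<bar> + 1 / 2"
    using r by arith
  also have "\<bar>x / \<delta>\<bar> \<le> ((x / \<delta>)\<^sup>2 + 1) / 2"
    using sum_power2_ge_zero[of "\<bar>x / \<delta>\<bar> - 1" 0] by (simp add: power2_eq_square algebra_simps)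
  finally show "real (nat \<bar>round (x / \<delta>)\<bar>) \<le> x\<^sup>2 / (2 * \<delta>\<^sup>2) + 1"
    by (simp add: power_divide add_divide_distrib)
qed

definition lattice_round :: "real \<Rightarrow> nat \<Rightarrow> (nat \<Rightarrow> complex) \<Rightarrow> nat \<Rightarrow> int \<times> int" where
  "lattice_round \<delta> d z = restrict (\<lambda>k. (round (Re (z k) / \<delta>), round (Im (z k) / \<delta>))) {..<d}"

definition lattice_point :: "real \<Rightarrow> nat \<Rightarrow> (nat \<Rightarrow> int \<times> int) \<Rightarrow> nat \<Rightarrow> complex" where
  "lattice_point \<delta> d p k =
    (if k < d then complex_of_real \<delta> * Complex (of_int (fst (p k))) (of_int (snd (p k))) else 0)"

lemma card_gauss_int_weight_le:
  "real (card {p \<in> {..<d} \<rightarrow>\<^sub>E {-int K..int K} \<times> {-int K..int K}. (\<Sum>k<d. gauss_int_weight (p k)) \<le> K})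
    \<le> 2 ^ K * 9 ^ d"
proof -
  have "real (card {p \<in> {..<d} \<rightarrow>\<^sub>E {-int K..int K} \<times> {-int K..int K}. (\<Sum>k<d. gauss_int_weight (p k)) \<le> K})
      \<le> 2 ^ K * (\<Sum>q\<in>{-int K..int K} \<times> {-int K..int K}. (1 / 2) ^ gauss_int_weight q) ^ d"
    using card_PiE_weight_le[of "{..<d}" _ gauss_int_weight K] by simp
  also have "\<dots> \<le> 2 ^ K * 9 ^ d"
    using sum_half_power_gauss_int_weight_le[of K] by (intro mult_left_mono power_mono sum_nonneg) auto
  finally show ?thesis .
qed

lemma sum_gauss_int_weight_lattice_round_le:
  assumes "0 < \<delta>" "cnorm2 d z \<le> 1"
  shows "real (\<Sum>k<d. gauss_int_weight (lattice_round \<delta> d z k)) \<le> 1 / (2 * \<delta>\<^sup>2) + 2 * real d"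
proof -
  have "real (\<Sum>k<d. gauss_int_weight (lattice_round \<delta> d z k)) \<le> (\<Sum>k<d. (cmod (z k))\<^sup>2 / (2 * \<delta>\<^sup>2) + 2)"
    unfolding of_nat_sum
  proof (rule sum_mono)
    fix k assume "k \<in> {..<d}"
    then show "real (gauss_int_weight (lattice_round \<delta> d z k)) \<le> (cmod (z k))\<^sup>2 / (2 * \<delta>\<^sup>2) + 2"
      using round_approx(2)[OF assms(1), of "Re (z k)"] round_approx(2)[OF assms(1), of "Im (z k)"]
      by (simp add: gauss_int_weight_def lattice_round_def cmod_power2 add_divide_distrib)
  qed
  also have "\<dots> = (cnorm2 d z)\<^sup>2 / (2 * \<delta>\<^sup>2) + 2 * real d"
    by (simp add: power2_cnorm2 sum.distrib sum_divide_distrib)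
  also have "\<dots> \<le> 1 / (2 * \<delta>\<^sup>2) + 2 * real d"
    using power_mono[OF assms(2) cnorm2_nonneg, of 2] by (intro add_right_mono divide_right_mono) simp_all
  finally show ?thesis .
qed

lemma lattice_round_in_PiE:
  assumes "(\<Sum>k<d. gauss_int_weight (lattice_round \<delta> d z k)) \<le> K"
  shows "lattice_round \<delta> d z \<in> {..<d} \<rightarrow>\<^sub>E {-int K..int K} \<times> {-int K..int K}"
proof -
  have "lattice_round \<delta> d z k \<in> {-int K..int K} \<times> {-int K..int K}" if "k < d" for k
  proof -
    have "gauss_int_weight (lattice_round \<delta> d z k) \<le> (\<Sum>k<d. gauss_int_weight (lattice_round \<delta> d z k))"
      using that by (intro member_le_sum) auto
    then have "gauss_int_weight (lattice_round \<delta> d z k) \<le> K"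
      using assms by linarith
    then show ?thesis
      by (cases "lattice_round \<delta> d z k") (auto simp: gauss_int_weight_def)
  qed
  then show ?thesis
    by (auto simp: lattice_round_def)
qed

lemma cnorm2_diff_lattice_round_le:
  assumes "0 < \<delta>"
  shows "cnorm2 d (\<lambda>k. z k - lattice_point \<delta> d (lattice_round \<delta> d z) k) \<le> sqrt (real d * \<delta>\<^sup>2 / 2)"
proof -
  have "(\<Sum>k<d. (cmod (z k - lattice_point \<delta> d (lattice_round \<delta> d z) k))\<^sup>2) \<le> (\<Sum>k<d. \<delta>\<^sup>2 / 2)"
  proof (rule sum_mono)
    fix k assume "k \<in> {..<d}"
    have "(Re (z k) - \<delta> * of_int (round (Re (z k) / \<delta>)))\<^sup>2 \<le> (\<delta> / 2)\<^sup>2"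
        "(Im (z k) - \<delta> * of_int (round (Im (z k) / \<delta>)))\<^sup>2 \<le> (\<delta> / 2)\<^sup>2"
      using round_approx(1)[OF assms] assms by (simp_all add: abs_le_square_iff[symmetric])
    with \<open>k \<in> {..<d}\<close> show "(cmod (z k - lattice_point \<delta> d (lattice_round \<delta> d z) k))\<^sup>2 \<le> \<delta>\<^sup>2 / 2"
      by (simp add: lattice_point_def lattice_round_def cmod_power2 power_divide)
  qed
  then show ?thesis
    unfolding cnorm2_def by (intro real_sqrt_le_mono) simp
qed

lemma complex_unit_ball_net:
  assumes "2 \<le> n"
  shows "\<exists>N. finite N \<and> real (card N) \<le> (9 * 2 ^ n\<^sup>2) ^ d \<and>
    (\<forall>z. cnorm2 d z \<le> 1 \<longrightarrow> (\<exists>y\<in>N. cnorm2 d (\<lambda>k. z k - y k) \<le> 1 / real n))"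
proof (cases "d = 0")
  case True
  then show ?thesis
    by (intro exI[of _ "{\<lambda>k. 0}"]) (simp add: cnorm2_def)
next
  case False
  define \<delta> where "\<delta> = 1 / (real n * sqrt (real d))"
  define K where "K = n\<^sup>2 * d"
  define P where "P = {p \<in> {..<d} \<rightarrow>\<^sub>E {-int K..int K} \<times> {-int K..int K}.
    (\<Sum>k<d. gauss_int_weight (p k)) \<le> K}"
  have \<delta>: "0 < \<delta>" "\<delta>\<^sup>2 = 1 / ((real n)\<^sup>2 * real d)"
    using False assms by (simp_all add: \<delta>_def power_divide power_mult_distrib)
  have "finite P"
    unfolding P_def
    by (rule finite_subset[OF _ finite_PiE[of "{..<d}" "\<lambda>_. {-int K..int K} \<times> {-int K..int K}"]]) auto
  have "real (card (lattice_point \<delta> d ` P)) \<le> real (card P)"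
    using card_image_le[OF \<open>finite P\<close>] by simp
  also have "\<dots> \<le> 2 ^ K * 9 ^ d"
    unfolding P_def by (rule card_gauss_int_weight_le)
  also have "\<dots> = (9 * 2 ^ n\<^sup>2) ^ d"
    by (simp add: K_def power_mult power_mult_distrib)
  finally have card: "real (card (lattice_point \<delta> d ` P)) \<le> (9 * 2 ^ n\<^sup>2) ^ d" .
  have "lattice_round \<delta> d z \<in> P \<and> cnorm2 d (\<lambda>k. z k - lattice_point \<delta> d (lattice_round \<delta> d z) k) \<le> 1 / real n"
    if z: "cnorm2 d z \<le> 1" for z
  proof
    have "4 * real d \<le> (real n)\<^sup>2 * real d"
      using power_mono[of 2 "real n" 2] assms by (intro mult_right_mono) auto
    then have "1 / (2 * \<delta>\<^sup>2) + 2 * real d \<le> real K"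
      by (simp add: \<delta>(2) K_def)
    then have "(\<Sum>k<d. gauss_int_weight (lattice_round \<delta> d z k)) \<le> K"
      using sum_gauss_int_weight_lattice_round_le[OF \<delta>(1) z] by linarith
    then show "lattice_round \<delta> d z \<in> P"
      unfolding P_def using lattice_round_in_PiE by blast
    have "real d * \<delta>\<^sup>2 / 2 = (1 / real n)\<^sup>2 / 2"
      using False by (simp add: \<delta>(2) power_divide)
    then have "sqrt (real d * \<delta>\<^sup>2 / 2) \<le> sqrt ((1 / real n)\<^sup>2)"
      by (intro real_sqrt_le_mono) simp
    then show "cnorm2 d (\<lambda>k. z k - lattice_point \<delta> d (lattice_round \<delta> d z) k) \<le> 1 / real n"
      using cnorm2_diff_lattice_round_le[OF \<delta>(1), of d z] by simp
  qed
  then show ?thesis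
    using card \<open>finite P\<close> by blast
qed

lemma le_cnorm2_of_unit_ball_bound:
  fixes f :: "(nat \<Rightarrow> complex) \<Rightarrow> real"
  assumes mult: "\<And>c u. f (\<lambda>k. complex_of_real c * u k) = \<bar>c\<bar> * f u"
    and bounded: "\<And>u. f u \<le> K * cnorm2 d u"
    and unit: "\<And>z. cnorm2 d z \<le> 1 \<Longrightarrow> f z \<le> S"
  shows "f v \<le> S * cnorm2 d v"
proof (cases "cnorm2 d v = 0")
  case True
  then show ?thesis
    using bounded[of v] by simp
next
  case False
  then have v: "0 < cnorm2 d v"
    using cnorm2_nonneg[of d v] by linarith
  have "cnorm2 d (\<lambda>k. complex_of_real (1 / cnorm2 d v) * v k) = 1"
    using v by (subst cnorm2_mult) (simp add: norm_divide)
  then have "f (\<lambda>k. complex_of_real (1 / cnorm2 d v) * v k) \<le> S"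
    by (intro unit) simp
  then have "f v / cnorm2 d v \<le> S"
    using v by (simp only: mult) (simp add: abs_of_pos)
  then show ?thesis
    using v by (simp add: field_simps)
qed

lemma exists_least_cnorm2_bound:
  fixes f :: "(nat \<Rightarrow> complex) \<Rightarrow> real"
  assumes mult: "\<And>c u. f (\<lambda>k. complex_of_real c * u k) = \<bar>c\<bar> * f u"
    and bounded: "\<And>u. f u \<le> K * cnorm2 d u"
  obtains S where "0 \<le> S" "\<And>v. f v \<le> S * cnorm2 d v"
    and "\<And>S'. (\<And>z. cnorm2 d z \<le> 1 \<Longrightarrow> f z \<le> S') \<Longrightarrow> S \<le> S'"
proof -
  define Z where "Z = {z. cnorm2 d z \<le> 1}"
  have zero: "(\<lambda>k. 0) \<in> Z" "f (\<lambda>k. 0) = 0"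
    using mult[of 0] by (simp_all add: Z_def cnorm2_def)
  have "bdd_above (f ` Z)"
  proof (rule bdd_aboveI2)
    fix z assume "z \<in> Z"
    then have "K * cnorm2 d z \<le> \<bar>K\<bar> * 1"
      using cnorm2_nonneg[of d z] by (intro mult_mono) (auto simp: Z_def)
    then show "f z \<le> \<bar>K\<bar>"
      using bounded[of z] by simp
  qed
  then have le_Sup: "f z \<le> (SUP z\<in>Z. f z)" if "z \<in> Z" for z
    using that by (rule cSUP_upper2) simp
  show ?thesis
  proof (rule that)
    show "0 \<le> (SUP z\<in>Z. f z)"
      using le_Sup zero by fastforce
    show "f v \<le> (SUP z\<in>Z. f z) * cnorm2 d v" for v
      using mult bounded le_Sup by (rule le_cnorm2_of_unit_ball_bound) (simp add: Z_def)
    show "(SUP z\<in>Z. f z) \<le> S'" if "\<And>z. cnorm2 d z \<le> 1 \<Longrightarrow> f z \<le> S'" for S'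
      using that zero by (intro cSUP_least) (auto simp: Z_def)
  qed
qed

lemma bound_from_net:
  fixes f :: "(nat \<Rightarrow> complex) \<Rightarrow> real"
  assumes add: "\<And>u v. f (\<lambda>k. u k + v k) \<le> f u + f v"
    and mult: "\<And>c u. f (\<lambda>k. complex_of_real c * u k) = \<bar>c\<bar> * f u"
    and bounded: "\<And>u. f u \<le> K * cnorm2 d u"
    and net: "\<And>z. cnorm2 d z \<le> 1 \<Longrightarrow> \<exists>y\<in>N. cnorm2 d (\<lambda>k. z k - y k) \<le> \<epsilon>"
    and on_net: "\<And>y. y \<in> N \<Longrightarrow> f y \<le> a * cnorm2 d y"
    and \<epsilon>: "0 \<le> \<epsilon>" "\<epsilon> < 1" and "0 \<le> a"
  shows "f u \<le> a * (1 + \<epsilon>) / (1 - \<epsilon>) * cnorm2 d u"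
proof -
  obtain S where "0 \<le> S" and hom: "\<And>v. f v \<le> S * cnorm2 d v"
    and least: "\<And>S'. (\<And>z. cnorm2 d z \<le> 1 \<Longrightarrow> f z \<le> S') \<Longrightarrow> S \<le> S'"
    using exists_least_cnorm2_bound[OF mult bounded] by blast
  have "f z \<le> a * (1 + \<epsilon>) + \<epsilon> * S" if z: "cnorm2 d z \<le> 1" for z
  proof -
    obtain y where y: "y \<in> N" "cnorm2 d (\<lambda>k. z k - y k) \<le> \<epsilon>"
      using net z by blast
    have "cnorm2 d y \<le> cnorm2 d z + cnorm2 d (\<lambda>k. z k - y k)"
      using cnorm2_add_le[of d z "\<lambda>k. y k - z k"] cnorm2_minus_commute[of d y z] by simp
    also have "\<dots> \<le> 1 + \<epsilon>"
      using z y(2) by simp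
    finally have ny: "cnorm2 d y \<le> 1 + \<epsilon>" .
    have "f z \<le> f y + f (\<lambda>k. z k - y k)"
      using add[of y "\<lambda>k. z k - y k"] by simp
    also have "\<dots> \<le> a * (1 + \<epsilon>) + S * \<epsilon>"
    proof (rule add_mono)
      show "f y \<le> a * (1 + \<epsilon>)"
        using on_net[OF y(1)] mult_left_mono[OF ny \<open>0 \<le> a\<close>] by linarith
      show "f (\<lambda>k. z k - y k) \<le> S * \<epsilon>"
        using hom[of "\<lambda>k. z k - y k"] mult_left_mono[OF y(2) \<open>0 \<le> S\<close>] by linarith
    qed
    finally show ?thesis
      by (simp add: algebra_simps)
  qed
  then have "S \<le> a * (1 + \<epsilon>) + \<epsilon> * S"
    by (rule least)
  then have "S \<le> a * (1 + \<epsilon>) / (1 - \<epsilon>)"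
    using \<epsilon> by (simp add: field_simps)
  then have "S * cnorm2 d u \<le> a * (1 + \<epsilon>) / (1 - \<epsilon>) * cnorm2 d u"
    by (rule mult_right_mono) (rule cnorm2_nonneg)
  with hom[of u] show ?thesis
    by linarith
qed

lemma abs_cmod_square_diff_le: "\<bar>(cmod p)\<^sup>2 - (cmod q)\<^sup>2\<bar> \<le> cmod (p - q) * cmod (p + q)"
proof -
  have "(cmod p)\<^sup>2 - (cmod q)\<^sup>2 = Re ((p - q) * cnj (p + q))"
    unfolding cmod_power2 by (simp add: power2_eq_square algebra_simps)
  also have "\<bar>\<dots>\<bar> \<le> cmod ((p - q) * cnj (p + q))"
    by (rule abs_Re_le_cmod)
  also have "\<dots> = cmod (p - q) * cmod (p + q)"
    by (simp only: norm_mult complex_mod_cnj)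
  finally show ?thesis .
qed

lemma sum_abs_cmod_square_diff_le:
  assumes L: "\<And>u. cnorm2 m (\<lambda>j. cinner d (A j) u) \<le> L * cnorm2 d u"
  shows "(\<Sum>j<m. \<bar>(cmod (cinner d (A j) z + b j))\<^sup>2 - (cmod (cinner d (A j) w + b j))\<^sup>2\<bar>)
    \<le> L * cnorm2 d (\<lambda>k. z k - w k) * (L * cnorm2 d z + L * cnorm2 d w + 2 * cnorm2 m b)"
proof -
  define e where "e = (\<lambda>j. cinner d (A j) (\<lambda>k. z k - w k))"
  define t where "t = (\<lambda>j. cinner d (A j) z + cinner d (A j) w + 2 * b j)"
  have "(\<Sum>j<m. \<bar>(cmod (cinner d (A j) z + b j))\<^sup>2 - (cmod (cinner d (A j) w + b j))\<^sup>2\<bar>)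
      \<le> (\<Sum>j<m. \<bar>cmod (e j)\<bar> * \<bar>cmod (t j)\<bar>)"
  proof (intro sum_mono)
    fix j
    have "(cinner d (A j) z + b j) - (cinner d (A j) w + b j) = e j"
      by (simp add: e_def cinner_diff_right)
    moreover have "(cinner d (A j) z + b j) + (cinner d (A j) w + b j) = t j"
      by (simp add: t_def)
    ultimately show "\<bar>(cmod (cinner d (A j) z + b j))\<^sup>2 - (cmod (cinner d (A j) w + b j))\<^sup>2\<bar>
        \<le> \<bar>cmod (e j)\<bar> * \<bar>cmod (t j)\<bar>"
      using abs_cmod_square_diff_le[of "cinner d (A j) z + b j" "cinner d (A j) w + b j"] by simp
  qed
  also have "\<dots> \<le> cnorm2 m e * cnorm2 m t"
    unfolding cnorm2_conv_L2_set by (rule L2_set_mult_ineq)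
  also have "\<dots> \<le> L * cnorm2 d (\<lambda>k. z k - w k) * (L * cnorm2 d z + L * cnorm2 d w + 2 * cnorm2 m b)"
  proof (rule mult_mono)
    show "cnorm2 m e \<le> L * cnorm2 d (\<lambda>k. z k - w k)"
      unfolding e_def by (rule L)
    have "cnorm2 m t \<le> cnorm2 m (\<lambda>j. cinner d (A j) z) + cnorm2 m (\<lambda>j. cinner d (A j) w)
        + cnorm2 m (\<lambda>j. 2 * b j)"
      unfolding t_def
      using cnorm2_add_le[of m "\<lambda>j. cinner d (A j) z + cinner d (A j) w" "\<lambda>j. 2 * b j"]
        cnorm2_add_le[of m "\<lambda>j. cinner d (A j) z" "\<lambda>j. cinner d (A j) w"]
      by simp
    then show "cnorm2 m t \<le> L * cnorm2 d z + L * cnorm2 d w + 2 * cnorm2 m b"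
      using L[of z] L[of w] by (simp add: cnorm2_mult)
    show "0 \<le> L * cnorm2 d (\<lambda>k. z k - w k)"
      using L[of "\<lambda>k. z k - w k"] cnorm2_nonneg order_trans by blast
  qed (rule cnorm2_nonneg)
  finally show ?thesis .
qed

lemma mean_abs_cmod_square_diff_le:
  assumes L: "\<And>u. cnorm2 m (\<lambda>j. cinner d (A j) u) \<le> sqrt (\<kappa> * real m) * cnorm2 d u"
    and "1 \<le> \<kappa>"
  shows "(1 / real m) * (\<Sum>j<m. \<bar>(cmod (cinner d (A j) z + b j))\<^sup>2 - (cmod (cinner d (A j) w + b j))\<^sup>2\<bar>)
    \<le> \<kappa> * (cnorm2 d z + cnorm2 d w + 2 * cnorm2 m b / sqrt (real m)) * cnorm2 d (\<lambda>k. z k - w k)"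
proof (cases "m = 0")
  case True
  then show ?thesis
    using \<open>1 \<le> \<kappa>\<close> by (simp add: cnorm2_nonneg)
next
  case False
  define r where "r = sqrt (real m)"
  define c where "c = sqrt \<kappa>"
  let ?D = "cnorm2 d (\<lambda>k. z k - w k)" and ?S = "cnorm2 d z + cnorm2 d w" and ?B = "cnorm2 m b"
  have r: "0 < r" "real m = r\<^sup>2"
    using False by (simp_all add: r_def)
  have c: "c\<^sup>2 = \<kappa>" "c \<le> \<kappa>"
    using \<open>1 \<le> \<kappa>\<close> by (simp_all add: c_def real_sqrt_le_iff' power2_eq_square)
  have "\<And>u. cnorm2 m (\<lambda>j. cinner d (A j) u) \<le> c * r * cnorm2 d u"
    using L by (simp add: r_def c_def real_sqrt_mult)
  from sum_abs_cmod_square_diff_le[OF this, where z=z and w=w and b=b]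
  have "(1 / real m) * (\<Sum>j<m. \<bar>(cmod (cinner d (A j) z + b j))\<^sup>2 - (cmod (cinner d (A j) w + b j))\<^sup>2\<bar>)
      \<le> (1 / r\<^sup>2) * (c * r * ?D * (c * r * cnorm2 d z + c * r * cnorm2 d w + 2 * ?B))"
    unfolding r(2) by (rule mult_left_mono) simp
  also have "\<dots> = c\<^sup>2 * ?S * ?D + c * (2 * ?B / r) * ?D"
    using r(1) by (simp add: field_simps power2_eq_square)
  also have "\<dots> \<le> \<kappa> * ?S * ?D + \<kappa> * (2 * ?B / r) * ?D"
    unfolding c(1) using c(2) r(1) cnorm2_nonneg
    by (intro add_mono order_refl mult_right_mono) auto
  finally show ?thesis
    by (simp add: r_def algebra_simps)
qed

lemma exists_exp_decay_bound:
  fixes B \<rho> :: real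
  assumes "1 < B" "0 < \<rho>" "\<rho> < 1"
  shows "\<exists>C c. 0 < C \<and> 0 < c \<and>
    (\<forall>m d :: nat. C * real d \<le> real m \<longrightarrow> B ^ d * \<rho> ^ m \<le> exp (- c * real m))"
proof -
  define c where "c = - ln \<rho> / 2"
  define C where "C = ln B / c"
  have "0 < ln B" "ln \<rho> < 0"
    using assms by simp_all
  then have c: "0 < c" and C: "0 < C"
    by (simp_all add: c_def C_def divide_pos_neg)
  have "B ^ d * \<rho> ^ m \<le> exp (- c * real m)" if "C * real d \<le> real m" for m d :: nat
  proof -
    have "real d * ln B \<le> c * real m"
      using that c by (simp add: C_def field_simps)
    then have "real d * ln B + real m * ln \<rho> \<le> - c * real m"
      by (simp add: c_def algebra_simps)
    moreover have "exp (real d * ln B + real m * ln \<rho>) = B ^ d * \<rho> ^ m"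
      using assms by (simp add: exp_add exp_of_nat_mult)
    ultimately show ?thesis
      by (metis exp_le_cancel_iff)
  qed
  then show ?thesis
    using C c by blast
qed

lemma gauss_sample_net_deviation:
  assumes "finite N" "1 < \<theta>"
  shows "measure (gauss_sample m d) (\<Union>y\<in>N. {A \<in> space (gauss_sample m d).
      \<theta> * real m * (cnorm2 d y)\<^sup>2 < (cnorm2 m (\<lambda>j. cinner d (A j) y))\<^sup>2})
    \<le> real (card N) * (\<theta> * exp (1 - \<theta>)) ^ m"
proof -
  have "measure (gauss_sample m d) (\<Union>y\<in>N. {A \<in> space (gauss_sample m d).
      \<theta> * real m * (cnorm2 d y)\<^sup>2 < (cnorm2 m (\<lambda>j. cinner d (A j) y))\<^sup>2})
    \<le> (\<Sum>y\<in>N. measure (gauss_sample m d) {A \<in> space (gauss_sample m d).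
      \<theta> * real m * (cnorm2 d y)\<^sup>2 < (cnorm2 m (\<lambda>j. cinner d (A j) y))\<^sup>2})"
    using assms(1) by (rule measure_UNION_le) measurable
  also have "\<dots> \<le> (\<Sum>y\<in>N. (\<theta> * exp (1 - \<theta>)) ^ m)"
    using assms(2) by (intro sum_mono gauss_sample_tail)
  finally show ?thesis
    by simp
qed

lemma cnorm2_cinner_bound_from_net:
  assumes net: "\<And>z. cnorm2 d z \<le> 1 \<Longrightarrow> \<exists>y\<in>N. cnorm2 d (\<lambda>k. z k - y k) \<le> 1 / 20"
    and on_net: "\<And>y. y \<in> N \<Longrightarrow> (cnorm2 m (\<lambda>j. cinner d (A j) y))\<^sup>2 \<le> 6 / 5 * real m * (cnorm2 d y)\<^sup>2"
  shows "cnorm2 m (\<lambda>j. cinner d (A j) u) \<le> sqrt (3 / 2 * real m) * cnorm2 d u"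
proof -
  let ?f = "\<lambda>u. cnorm2 m (\<lambda>j. cinner d (A j) u)" and ?a = "sqrt (6 / 5 * real m)"
  have "?f (\<lambda>k. u k + v k) \<le> ?f u + ?f v" for u v
    using cnorm2_add_le by (simp add: cinner_add_right)
  moreover have "?f (\<lambda>k. complex_of_real c * u k) = \<bar>c\<bar> * ?f u" for c u
    by (simp add: cinner_mult_right cnorm2_mult)
  moreover have "?f u \<le> L2_set (\<lambda>j. cnorm2 d (A j)) {..<m} * cnorm2 d u" for u
  proof -
    have "?f u \<le> L2_set (\<lambda>j. cnorm2 d (A j) * cnorm2 d u) {..<m}"
      unfolding cnorm2_conv_L2_set[of m] by (intro L2_set_mono cmod_cinner_le norm_ge_zero)
    then show ?thesis
      by (simp add: L2_set_left_distrib cnorm2_nonneg)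
  qed
  moreover have "?f y \<le> ?a * cnorm2 d y" if "y \<in> N" for y
  proof -
    have "?f y = sqrt ((?f y)\<^sup>2)"
      by (simp add: cnorm2_nonneg)
    also have "\<dots> \<le> sqrt (6 / 5 * real m * (cnorm2 d y)\<^sup>2)"
      using on_net[OF that] by (rule real_sqrt_le_mono)
    also have "\<dots> = ?a * cnorm2 d y"
      by (simp only: real_sqrt_mult real_sqrt_abs) (simp add: cnorm2_nonneg)
    finally show ?thesis .
  qed
  ultimately have "?f u \<le> ?a * (1 + 1 / 20) / (1 - 1 / 20) * cnorm2 d u"
    using net by (intro bound_from_net[where N = N]) auto
  also have "?a * (1 + 1 / 20) / (1 - 1 / 20) = sqrt (6 / 5 * real m * (21 / 19)\<^sup>2)"
    by (simp only: real_sqrt_mult real_sqrt_abs) simp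
  also have "\<dots> \<le> sqrt (3 / 2 * real m)"
    by (simp add: power2_eq_square)
  finally show ?thesis
    by (simp add: mult_right_mono cnorm2_nonneg)
qed

lemma gauss_sample_cnorm2_bound_event:
  "\<exists>E \<in> sets (gauss_sample m d).
     1 - (9 * 2 ^ 20\<^sup>2) ^ d * (6 / 5 * exp (1 - 6 / 5)) ^ m \<le> measure (gauss_sample m d) E \<and>
     (\<forall>A \<in> E. \<forall>u. cnorm2 m (\<lambda>j. cinner d (A j) u) \<le> sqrt (3 / 2 * real m) * cnorm2 d u)"
proof -
  let ?M = "gauss_sample m d"
  interpret prob_space ?M
    by (rule prob_space_gauss_sample)
  obtain N where N: "finite N" "real (card N) \<le> (9 * 2 ^ 20\<^sup>2) ^ d"
    and net: "\<And>z. cnorm2 d z \<le> 1 \<Longrightarrow> \<exists>y\<in>N. cnorm2 d (\<lambda>k. z k - y k) \<le> 1 / 20"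
    using complex_unit_ball_net[of 20 d] by auto
  define U where "U = (\<Union>y\<in>N. {A \<in> space ?M. 6 / 5 * real m * (cnorm2 d y)\<^sup>2 < (cnorm2 m (\<lambda>j. cinner d (A j) y))\<^sup>2})"
  have U: "U \<in> sets ?M"
    unfolding U_def using N(1) by (intro sets.finite_UN) measurable
  have "measure ?M U \<le> real (card N) * (6 / 5 * exp (1 - 6 / 5)) ^ m"
    unfolding U_def using N(1) by (rule gauss_sample_net_deviation) simp
  also have "\<dots> \<le> (9 * 2 ^ 20\<^sup>2) ^ d * (6 / 5 * exp (1 - 6 / 5)) ^ m"
    using N(2) by (rule mult_right_mono) simp
  finally have "1 - (9 * 2 ^ 20\<^sup>2) ^ d * (6 / 5 * exp (1 - 6 / 5)) ^ m \<le> measure ?M (space ?M - U)"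
    using prob_compl[OF U] by simp
  moreover have "cnorm2 m (\<lambda>j. cinner d (A j) u) \<le> sqrt (3 / 2 * real m) * cnorm2 d u"
    if "A \<in> space ?M - U" for A u
    using net that by (intro cnorm2_cinner_bound_from_net[where N = N]) (auto simp: U_def not_less)
  ultimately show ?thesis
    using U by blast
qed

lemma gauss_sample_cnorm2_bound:
  "\<exists>C c. 0 < C \<and> 0 < c \<and> (\<forall>m d. C * real d \<le> real m \<longrightarrow>
     (\<exists>E \<in> sets (gauss_sample m d). 1 - exp (- c * real m) \<le> measure (gauss_sample m d) E \<and>
        (\<forall>A \<in> E. \<forall>u. cnorm2 m (\<lambda>j. cinner d (A j) u) \<le> sqrt (3 / 2 * real m) * cnorm2 d u)))"
proof -
  define B :: real where "B = 9 * 2 ^ 20\<^sup>2"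
  define \<rho> :: real where "\<rho> = 6 / 5 * exp (1 - 6 / 5)"
  have "6 / 5 < exp (1 / 5 :: real)"
    using exp_minus_greater[of "- 1 / 5"] by simp
  then have "0 < \<rho>" "\<rho> < 1"
    by (simp_all add: \<rho>_def exp_minus field_simps)
  moreover have "1 < B"
    by (simp add: B_def)
  ultimately obtain C c where "0 < C" "0 < c"
    and decay: "\<And>m d :: nat. C * real d \<le> real m \<Longrightarrow> B ^ d * \<rho> ^ m \<le> exp (- c * real m)"
    using exists_exp_decay_bound by blast
  have "\<exists>E \<in> sets (gauss_sample m d). 1 - exp (- c * real m) \<le> measure (gauss_sample m d) E \<and>
      (\<forall>A \<in> E. \<forall>u. cnorm2 m (\<lambda>j. cinner d (A j) u) \<le> sqrt (3 / 2 * real m) * cnorm2 d u)"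
    if m_ge: "C * real d \<le> real m" for m d
  proof -
    obtain E where "E \<in> sets (gauss_sample m d)" and "1 - B ^ d * \<rho> ^ m \<le> measure (gauss_sample m d) E"
      and "\<forall>A \<in> E. \<forall>u. cnorm2 m (\<lambda>j. cinner d (A j) u) \<le> sqrt (3 / 2 * real m) * cnorm2 d u"
      using gauss_sample_cnorm2_bound_event[of m d, folded B_def \<rho>_def] by blast
    moreover have "1 - exp (- c * real m) \<le> 1 - B ^ d * \<rho> ^ m"
      using decay[OF m_ge] by linarith
    ultimately show ?thesis
      by (meson order_trans)
  qed
  then show ?thesis
    using \<open>0 < C\<close> \<open>0 < c\<close> by blast
qed

theorem lemma9:
  shows "\<exists>C c :: real. C > 0 \<and> c > 0 \<and>
    (\<forall>m d :: nat. real m \<ge> C * real d \<longrightarrow>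
      (\<exists>E \<in> sets (gauss_sample m d).
         measure (gauss_sample m d) E \<ge> 1 - 3 * exp (- c * real m) \<and>
         (\<forall>A \<in> E. \<forall>z w b :: nat \<Rightarrow> complex.
            (1 / real m) * (\<Sum>j<m. \<bar>(cmod (cinner d (A j) z + b j))\<^sup>2
                                  - (cmod (cinner d (A j) w + b j))\<^sup>2\<bar>)
            \<le> 3 / 2 * (cnorm2 d z + cnorm2 d w + 2 * cnorm2 m b / sqrt (real m))
                    * cnorm2 d (\<lambda>k. z k - w k))))"
proof -
  obtain C c where "0 < C" "0 < c" and bound: "\<And>m d. C * real d \<le> real m \<Longrightarrow>
      \<exists>E \<in> sets (gauss_sample m d). 1 - exp (- c * real m) \<le> measure (gauss_sample m d) E \<and>
        (\<forall>A \<in> E. \<forall>u. cnorm2 m (\<lambda>j. cinner d (A j) u) \<le> sqrt (3 / 2 * real m) * cnorm2 d u)"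
    using gauss_sample_cnorm2_bound by blast
  have "\<exists>E \<in> sets (gauss_sample m d).
      measure (gauss_sample m d) E \<ge> 1 - 3 * exp (- c * real m) \<and>
      (\<forall>A \<in> E. \<forall>z w b :: nat \<Rightarrow> complex.
        (1 / real m) * (\<Sum>j<m. \<bar>(cmod (cinner d (A j) z + b j))\<^sup>2 - (cmod (cinner d (A j) w + b j))\<^sup>2\<bar>)
        \<le> 3 / 2 * (cnorm2 d z + cnorm2 d w + 2 * cnorm2 m b / sqrt (real m)) * cnorm2 d (\<lambda>k. z k - w k))"
    if m_ge: "C * real d \<le> real m" for m d
  proof -
    obtain E where E: "E \<in> sets (gauss_sample m d)" "1 - exp (- c * real m) \<le> measure (gauss_sample m d) E"
      and iso: "\<And>A u. A \<in> E \<Longrightarrow> cnorm2 m (\<lambda>j. cinner d (A j) u) \<le> sqrt (3 / 2 * real m) * cnorm2 d u"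
      using bound[OF m_ge] by blast
    have "1 - 3 * exp (- c * real m) \<le> measure (gauss_sample m d) E"
      using E(2) exp_gt_zero[of "- c * real m"] by linarith
    then show ?thesis
      using E(1) mean_abs_cmod_square_diff_le[OF iso] by auto
  qed
  then show ?thesis
    using \<open>0 < C\<close> \<open>0 < c\<close> by blast
qed

end
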